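(* Let $g>0$, $c>0$ be constants and let $\alpha_1,\alpha_2,\alpha_3\in\mathbb{R}$, $\alpha_4=\alpha_2$. Consider the state $u=(h,hv,hw,hp)$ with $h>0$ together with a time-independent bathymetry value $b$ (treated as an extra component of the state, so $b_i$ is attached to cell $i$), the physical flux $f(u)=(hv,\ hv^2+\tfrac12gh^2+hp,\ hwv,\ hpv)$, and the nonconservative terms $H_1=(0,gh,0,0)^T$, $g_1=b$; $H_2=(0,2p,0,0)^T$, $g_2=b$; $H_3=(0,0,0,c^2h)^T$, $g_3=v$; $H_4=(0,0,0,-2c^2v)^T$, $g_4=b$. Consider the semi-discretization $$\partial_tu_i+\frac{f^{\mathrm{num}}_{i+1/2}-f^{\mathrm{num}}_{i-1/2}}{\Delta x}+\sum_{k=1}^4\Big(\alpha_k\frac{H^{\mathrm{num}}_{k,i+1/2}[\![g_k]\!]_{i+1/2}+H^{\mathrm{num}}_{k,i-1/2}[\![g_k]\!]_{i-1/2}}{2\Delta x}+(1-\alpha_k)H_k(u_i)\frac{[\![g_k]\!]_{i+1/2}+[\![g_k]\!]_{i-1/2}}{2\Delta x}\Big)=0,$$ with $H^{\mathrm{num}}_1=(0,gh^{\mathrm{num}},0,0)^T$, $H^{\mathrm{num}}_2=(0,2p^{\mathrm{num}},0,0)^T$, $H^{\mathrm{num}}_3=(0,0,0,c^2h^{\mathrm{num}})^T$, $H^{\mathrm{num}}_4=(0,0,0,-2c^2v^{\mathrm{num}})^T$ and $f^{\mathrm{num}}=(f^h,f^{hv},f^{hw},f^{hp})$ given by $$f^h=\alpha_1\{\{h\}\}\{\{v\}\}+(1-\alpha_1)\{\{hv\}\},$$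 $$f^{hv}=f^h\{\{v\}\}+(1-\alpha_1)g\{\{h\}\}^2+(\alpha_1-\tfrac12)g\{\{h^2\}\}+\alpha_3\{\{p\}\}\{\{h\}\}+(1-\alpha_3)\{\{ph\}\},$$ $$f^{hw}=f^h\{\{w\}\},\quad f^{hp}=f^h\{\{p\}\},\quad h^{\mathrm{num}}=\{\{h\}\},\quad v^{\mathrm{num}}=\{\{v\}\},\quad p^{\mathrm{num}}=\{\{p\}\}.$$ Then the semi-discretization conserves the total energy $U=\tfrac12hv^2+\tfrac12hw^2+\tfrac{1}{2c^2}hp^2+\tfrac12gh^2+ghb$, i.e., it is entropy-conservative for the pair $(U,F)$ with $F=Uv+\tfrac12gh^2v+hpv$.
   Context: For a quantity $a$ and neighboring states: $\{\{a\}\}=\tfrac12(a_-+a_+)$, $[\![a]\!]=a_+-a_-$; subscripts $i+1/2$ mean evaluation at $(u_-,u_+)=(u_i,u_{i+1})$ (including $b_i,b_{i+1}$). Entropy variables are $\omega=\big(-\tfrac{v^2}{2}-\tfrac{w^2}{2}-\tfrac{p^2}{2c^2}+gh+gb,\ v,\ w,\ \tfrac{p}{c^2}\big)$ (the derivative of $U$ with respect to $(h,hv,hw,hp)$). Entropy-conservative means: there exists $F^{\mathrm{num}}$ with $F^{\mathrm{num}}(u,u)=F(u)$ such that for all grid states and all $i$, $\omega(u_i)\cdot\partial_tu_i=-\frac{1}{\Delta x}(F^{\mathrm{num}}(u_i,u_{i+1})-F^{\mathrm{num}}(u_{i-1},u_i))$. *)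

theory Defs
  imports "HOL-Analysis.Analysis"
begin

text \<open>Cell state: primitive variables (h, v, w, p) together with the (time-independent)
  bathymetry value b attached to the cell. The conservative state is (h, hv, hw, hp).\<close>
record st =
  hgt  :: real
  vel  :: real
  velw :: real
  pres :: real
  bat  :: real

definition cons_u :: "st \<Rightarrow> real^4" where
  "cons_u s = vector [hgt s, hgt s * vel s, hgt s * velw s, hgt s * pres s]"

definition avg :: "real \<Rightarrow> real \<Rightarrow> real" where
  "avg a b = (a + b) / 2"

definition jmp :: "real \<Rightarrow> real \<Rightarrow> real" where
  "jmp a b = b - a"

definition phys_flux :: "real \<Rightarrow> st \<Rightarrow> real^4" where
  "phys_flux g s = vector [hgt s * vel s,
      hgt s * (vel s)^2 + g * (hgt s)^2 / 2 + hgt s * pres s,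
      hgt s * velw s * vel s, hgt s * pres s * vel s]"

definition energy :: "real \<Rightarrow> real \<Rightarrow> st \<Rightarrow> real" where
  "energy g c s = hgt s * (vel s)^2 / 2 + hgt s * (velw s)^2 / 2
      + hgt s * (pres s)^2 / (2 * c^2) + g * (hgt s)^2 / 2 + g * hgt s * bat s"

definition energy_flux :: "real \<Rightarrow> real \<Rightarrow> st \<Rightarrow> real" where
  "energy_flux g c s = energy g c s * vel s + g * (hgt s)^2 * vel s / 2
      + hgt s * pres s * vel s"

text \<open>Entropy variables omega = dU/d(h,hv,hw,hp).\<close>
definition entvar :: "real \<Rightarrow> real \<Rightarrow> st \<Rightarrow> real^4" where
  "entvar g c s = vector [(- ((vel s)^2 / 2) - (velw s)^2 / 2 - (pres s)^2 / (2 * c^2)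
      + g * hgt s + g * bat s), vel s, velw s, pres s / c^2]"

definition fnum_h :: "real \<Rightarrow> st \<Rightarrow> st \<Rightarrow> real" where
  "fnum_h a1 l r = a1 * avg (hgt l) (hgt r) * avg (vel l) (vel r)
      + (1 - a1) * avg (hgt l * vel l) (hgt r * vel r)"

definition fnum :: "real \<Rightarrow> real \<Rightarrow> real \<Rightarrow> st \<Rightarrow> st \<Rightarrow> real^4" where
  "fnum g a1 a3 l r = vector [fnum_h a1 l r,
      fnum_h a1 l r * avg (vel l) (vel r) + (1 - a1) * g * (avg (hgt l) (hgt r))^2
        + (a1 - 1/2) * g * avg ((hgt l)^2) ((hgt r)^2)
        + a3 * avg (pres l) (pres r) * avg (hgt l) (hgt r)
        + (1 - a3) * avg (pres l * hgt l) (pres r * hgt r),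
      fnum_h a1 l r * avg (velw l) (velw r),
      fnum_h a1 l r * avg (pres l) (pres r)]"

definition Hk :: "real \<Rightarrow> real \<Rightarrow> nat \<Rightarrow> st \<Rightarrow> real^4" where
  "Hk g c k s = (if k = 1 then vector [0, g * hgt s, 0, 0]
      else if k = 2 then vector [0, 2 * pres s, 0, 0]
      else if k = 3 then vector [0, 0, 0, c^2 * hgt s]
      else if k = 4 then vector [0, 0, 0, (- 2 * c^2 * vel s)]
      else 0)"

definition Hnum :: "real \<Rightarrow> real \<Rightarrow> nat \<Rightarrow> st \<Rightarrow> st \<Rightarrow> real^4" where
  "Hnum g c k l r = (if k = 1 then vector [0, g * avg (hgt l) (hgt r), 0, 0]
      else if k = 2 then vector [0, 2 * avg (pres l) (pres r), 0, 0]
      else if k = 3 then vector [0, 0, 0, c^2 * avg (hgt l) (hgt r)]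
      else if k = 4 then vector [0, 0, 0, (- 2 * c^2 * avg (vel l) (vel r))]
      else 0)"

definition gk :: "nat \<Rightarrow> st \<Rightarrow> real" where
  "gk k s = (if k = 3 then vel s else bat s)"

definition alph :: "real \<Rightarrow> real \<Rightarrow> real \<Rightarrow> nat \<Rightarrow> real" where
  "alph a1 a2 a3 k = (if k = 1 then a1 else if k = 2 then a2 else if k = 3 then a3 else a2)"

definition semidisc_rhs ::
  "real \<Rightarrow> real \<Rightarrow> real \<Rightarrow> real \<Rightarrow> real \<Rightarrow> real \<Rightarrow> (int \<Rightarrow> st) \<Rightarrow> int \<Rightarrow> real^4" where
  "semidisc_rhs g c a1 a2 a3 dx U i =
     - ((1 / dx) *\<^sub>R (fnum g a1 a3 (U i) (U (i + 1)) - fnum g a1 a3 (U (i - 1)) (U i))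
        + (\<Sum>k\<in>{1..4::nat}.
            (alph a1 a2 a3 k / (2 * dx)) *\<^sub>R
               (jmp (gk k (U i)) (gk k (U (i + 1))) *\<^sub>R Hnum g c k (U i) (U (i + 1))
                + jmp (gk k (U (i - 1))) (gk k (U i)) *\<^sub>R Hnum g c k (U (i - 1)) (U i))
          + ((1 - alph a1 a2 a3 k) * (jmp (gk k (U i)) (gk k (U (i + 1)))
                + jmp (gk k (U (i - 1))) (gk k (U i))) / (2 * dx)) *\<^sub>R Hk g c k (U i)))"

end

theory Submission
  imports Defs
begin

text \<open>The semi-discretization is a sum of face contributions: the face between cells l and r
  sends the flux -fnum - D(l) into cell l and fnum - D(r) into cell r, where D(s) is the
  nonconservative fluctuation of that face evaluated with H_k at cell s. Pairing with the
  entropy variables, a direct polynomial computation shows that the two energy contributions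
  of every face add up to the jump of the potential psi = omega f - F. Hence the energy
  contribution to the left cell, shifted by psi there, is an energy flux through the face;
  it reduces to F on constant states because fnum is consistent and D vanishes without jumps.\<close>

lemma vector_4 [simp]:
  "(vector [x, y, z, w] :: 'a::zero^4) $ 1 = x"
  "(vector [x, y, z, w] :: 'a::zero^4) $ 2 = y"
  "(vector [x, y, z, w] :: 'a::zero^4) $ 3 = z"
  "(vector [x, y, z, w] :: 'a::zero^4) $ 4 = w"
  unfolding vector_def by simp_all

lemma inner_vec_4: "(x :: real^4) \<bullet> y = x$1 * y$1 + x$2 * y$2 + x$3 * y$3 + x$4 * y$4"
  unfolding inner_vec_def sum_4 by simp

lemma sum_atLeastAtMost_1_4: "(\<Sum>k\<in>{1..4::nat}. f k) = f 1 + f 2 + f 3 + f 4"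
  by (simp add: numeral_eq_Suc atLeastAtMostSuc_conv ac_simps)

definition ncons_fluct :: "real \<Rightarrow> real \<Rightarrow> real \<Rightarrow> real \<Rightarrow> real \<Rightarrow> st \<Rightarrow> st \<Rightarrow> st \<Rightarrow> real^4" where
  "ncons_fluct g c a1 a2 a3 l r s = (\<Sum>k\<in>{1..4::nat}.
      (alph a1 a2 a3 k / 2) *\<^sub>R (jmp (gk k l) (gk k r) *\<^sub>R Hnum g c k l r)
      + ((1 - alph a1 a2 a3 k) * jmp (gk k l) (gk k r) / 2) *\<^sub>R Hk g c k s)"

lemma ncons_fluct_eq:
  "ncons_fluct g c a1 a2 a3 l r s = vector [0,
      jmp (bat l) (bat r) / 2 * (g * (a1 * avg (hgt l) (hgt r) + (1 - a1) * hgt s)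
        + 2 * (a2 * avg (pres l) (pres r) + (1 - a2) * pres s)),
      0,
      c^2 / 2 * (jmp (vel l) (vel r) * (a3 * avg (hgt l) (hgt r) + (1 - a3) * hgt s)
        - 2 * jmp (bat l) (bat r) * (a2 * avg (vel l) (vel r) + (1 - a2) * vel s))]"
  unfolding ncons_fluct_def sum_atLeastAtMost_1_4 vec_eq_iff forall_4
  by (simp add: Hk_def Hnum_def gk_def alph_def field_simps)

lemma ncons_fluct_same: "ncons_fluct g c a1 a2 a3 s s t = 0"
  by (simp add: ncons_fluct_eq jmp_def vec_eq_iff forall_4)

lemma fnum_same: "fnum g a1 a3 s s = phys_flux g s"
  by (simp add: fnum_def fnum_h_def phys_flux_def avg_def vec_eq_iff forall_4 algebra_simps
      power2_eq_square)

lemma semidisc_rhs_face_split: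
  "semidisc_rhs g c a1 a2 a3 dx U i = (1 / dx) *\<^sub>R
     ((- fnum g a1 a3 (U i) (U (i + 1)) - ncons_fluct g c a1 a2 a3 (U i) (U (i + 1)) (U i))
      + (fnum g a1 a3 (U (i - 1)) (U i) - ncons_fluct g c a1 a2 a3 (U (i - 1)) (U i) (U i)))"
  unfolding semidisc_rhs_def ncons_fluct_def sum_atLeastAtMost_1_4 vec_eq_iff forall_4
  by (simp add: algebra_simps add_divide_distrib diff_divide_distrib)

definition energy_potential :: "real \<Rightarrow> real \<Rightarrow> st \<Rightarrow> real" where
  "energy_potential g c s = entvar g c s \<bullet> phys_flux g s - energy_flux g c s"

lemma face_energy_balance:
  assumes "c \<noteq> 0"
  shows "entvar g c l \<bullet> (- fnum g a1 a3 l r - ncons_fluct g c a1 a2 a3 l r l)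
       + entvar g c r \<bullet> (fnum g a1 a3 l r - ncons_fluct g c a1 a2 a3 l r r)
       = energy_potential g c r - energy_potential g c l"
  using assms
  unfolding energy_potential_def inner_vec_4 ncons_fluct_eq
  by (simp add: fnum_def fnum_h_def phys_flux_def entvar_def energy_flux_def energy_def
      avg_def jmp_def field_simps power2_eq_square)

definition energy_fnum :: "real \<Rightarrow> real \<Rightarrow> real \<Rightarrow> real \<Rightarrow> real \<Rightarrow> st \<Rightarrow> st \<Rightarrow> real" where
  "energy_fnum g c a1 a2 a3 l r =
     entvar g c l \<bullet> (fnum g a1 a3 l r + ncons_fluct g c a1 a2 a3 l r l) - energy_potential g c l"

lemma energy_fnum_same: "energy_fnum g c a1 a2 a3 s s = energy_flux g c s"
  by (simp add: energy_fnum_def energy_potential_def fnum_same ncons_fluct_same)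

lemma energy_production_cell:
  assumes "c \<noteq> 0"
  shows "entvar g c (U i) \<bullet> semidisc_rhs g c a1 a2 a3 dx U i
     = - (energy_fnum g c a1 a2 a3 (U i) (U (i + 1))
          - energy_fnum g c a1 a2 a3 (U (i - 1)) (U i)) / dx"
proof -
  let ?\<omega> = "entvar g c" and ?F = "energy_fnum g c a1 a2 a3"
  let ?outflow = "- fnum g a1 a3 (U i) (U (i + 1)) - ncons_fluct g c a1 a2 a3 (U i) (U (i + 1)) (U i)"
  let ?inflow = "fnum g a1 a3 (U (i - 1)) (U i) - ncons_fluct g c a1 a2 a3 (U (i - 1)) (U i) (U i)"
  have "?\<omega> (U i) \<bullet> semidisc_rhs g c a1 a2 a3 dx U i
      = (?\<omega> (U i) \<bullet> ?outflow + ?\<omega> (U i) \<bullet> ?inflow) / dx"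
    unfolding semidisc_rhs_face_split by (simp add: inner_add_right divide_inverse)
  also have "?\<omega> (U i) \<bullet> ?outflow = - ?F (U i) (U (i + 1)) - energy_potential g c (U i)"
    by (simp add: energy_fnum_def inner_diff_right inner_add_right inner_minus_right)
  also have "?\<omega> (U i) \<bullet> ?inflow = ?F (U (i - 1)) (U i) + energy_potential g c (U i)"
    using face_energy_balance[of c g "U (i - 1)" a1 a3 "U i" a2, OF assms]
    by (simp add: energy_fnum_def inner_diff_right inner_add_right inner_minus_right)
  finally show ?thesis
    by simp
qed

theorem mainTheorem9:
  fixes g c a1 a2 a3 :: real
  assumes "g > 0" and "c > 0"
  shows "\<exists>Fnum :: st \<Rightarrow> st \<Rightarrow> real.
           (\<forall>s. hgt s > 0 \<longrightarrow> Fnum s s = energy_flux g c s) \<and>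
           (\<forall>dx > 0. \<forall>U :: int \<Rightarrow> st. (\<forall>j. hgt (U j) > 0) \<longrightarrow>
              (\<forall>i. entvar g c (U i) \<bullet> semidisc_rhs g c a1 a2 a3 dx U i
                   = - (Fnum (U i) (U (i + 1)) - Fnum (U (i - 1)) (U i)) / dx))"
proof (intro exI[of _ "energy_fnum g c a1 a2 a3"] conjI allI impI)
  show "energy_fnum g c a1 a2 a3 s s = energy_flux g c s" for s
    by (rule energy_fnum_same)
  show "entvar g c (U i) \<bullet> semidisc_rhs g c a1 a2 a3 dx U i
      = - (energy_fnum g c a1 a2 a3 (U i) (U (i + 1)) - energy_fnum g c a1 a2 a3 (U (i - 1)) (U i)) / dx"
    for dx U i
    using \<open>c > 0\<close> by (simp add: energy_production_cell)
qed

end
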